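(* Let $k$ be an algebraically closed field with $\operatorname{char}(k)\nmid(d+1)!$, $S=k[x_1,\dots,x_n]$, $\mathcal{D}=k[z_1,\dots,z_n]$, with the apolarity action $\mathcal{D}\times S\to S$, $F\circ g=F(\partial/\partial x_1,\dots,\partial/\partial x_n)\,g$. For $f\in S_{d+1}$, the apolar ideal $f^{\perp}=\{F\in\mathcal{D}\mid F\circ f=0\}$ has a minimal generator in degree $d+1$ if and only if there exists $g\in S_{d+1}$, not a scalar multiple of $f$, such that $\langle\nabla g\rangle\subset\langle\nabla f\rangle$.
   Context: $\langle\nabla f\rangle$ denotes the $k$-span of $\partial f/\partial x_1,\dots,\partial f/\partial x_n$ in $S_d$. *)

theory Defs
  imports "HOL-Computational_Algebra.Polynomial" "HOL-Library.Poly_Mapping"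
begin

text \<open>Both S = k[x_1..x_n] and
  D = k[z_1..z_n] are modelled as the polynomials whose monomials only involve the
  variables with index < n.\<close>

type_synonym 'a mpoly = "(nat \<Rightarrow>\<^sub>0 nat) \<Rightarrow>\<^sub>0 'a"

definition mono_deg :: "(nat \<Rightarrow>\<^sub>0 nat) \<Rightarrow> nat" where
  "mono_deg \<alpha> = (\<Sum>i\<in>Poly_Mapping.keys \<alpha>. Poly_Mapping.lookup \<alpha> i)"

definition polyring :: "nat \<Rightarrow> 'a::zero mpoly set" where
  "polyring n = {p. \<forall>\<alpha>\<in>Poly_Mapping.keys p. Poly_Mapping.keys \<alpha> \<subseteq> {..<n}}"

definition homog :: "nat \<Rightarrow> nat \<Rightarrow> 'a::zero mpoly set" where
  "homog n e = {p \<in> polyring n. \<forall>\<alpha>\<in>Poly_Mapping.keys p. mono_deg \<alpha> = e}"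

definition mp_const :: "'a::zero \<Rightarrow> 'a mpoly" where
  "mp_const c = Poly_Mapping.single 0 c"

definition mp_smult :: "'a::semiring_0 \<Rightarrow> 'a mpoly \<Rightarrow> 'a mpoly" where
  "mp_smult c p = mp_const c * p"

definition var :: "nat \<Rightarrow> 'a::{zero,one} mpoly" where
  "var i = Poly_Mapping.single (Poly_Mapping.single i 1) 1"

definition pderiv_mp :: "nat \<Rightarrow> 'a::comm_semiring_1 mpoly \<Rightarrow> 'a mpoly" where
  "pderiv_mp i p = (\<Sum>\<alpha>\<in>Poly_Mapping.keys p.
      Poly_Mapping.single (\<alpha> - Poly_Mapping.single i 1) (of_nat (Poly_Mapping.lookup \<alpha> i) * Poly_Mapping.lookup p \<alpha>))"

definition diff_op :: "nat \<Rightarrow> (nat \<Rightarrow>\<^sub>0 nat) \<Rightarrow> 'a::comm_semiring_1 mpoly \<Rightarrow> 'a mpoly" where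
  "diff_op n \<beta> g = foldr (\<lambda>i h. (pderiv_mp i ^^ Poly_Mapping.lookup \<beta> i) h) [0..<n] g"

definition apolar :: "nat \<Rightarrow> 'a::comm_semiring_1 mpoly \<Rightarrow> 'a mpoly \<Rightarrow> 'a mpoly" where
  "apolar n F g = (\<Sum>\<beta>\<in>Poly_Mapping.keys F. mp_smult (Poly_Mapping.lookup F \<beta>) (diff_op n \<beta> g))"

definition apolar_ideal :: "nat \<Rightarrow> 'a::comm_semiring_1 mpoly \<Rightarrow> 'a mpoly set" where
  "apolar_ideal n f = {F \<in> polyring n. apolar n F f = 0}"

definition max_ideal_times :: "nat \<Rightarrow> 'a::comm_semiring_1 mpoly set \<Rightarrow> 'a mpoly set" where
  "max_ideal_times n I = {(\<Sum>i<n. var i * G i) | G. \<forall>i<n. G i \<in> I}"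

text \<open>A homogeneous ideal I has a minimal generator in degree e iff (I / m I)_e \<noteq> 0.\<close>
definition has_min_gen_in_degree :: "nat \<Rightarrow> 'a::comm_semiring_1 mpoly set \<Rightarrow> nat \<Rightarrow> bool" where
  "has_min_gen_in_degree n I e = (\<exists>F\<in>I. F \<in> homog n e \<and> F \<notin> max_ideal_times n I)"

definition grad_span :: "nat \<Rightarrow> 'a::comm_semiring_1 mpoly \<Rightarrow> 'a mpoly set" where
  "grad_span n f = {(\<Sum>i<n. mp_smult (c i) (pderiv_mp i f)) | c. True}"

end

theory Submission
  imports Defs
begin

text \<open>For forms of the same degree, the constant term of \<open>F \<circ> g\<close> is the apolarity pairing
  \<open>\<langle>F, g\<rangle> = \<Sum>\<^sub>\<beta> F\<^sub>\<beta> \<beta>! g\<^sub>\<beta>\<close>, which is perfect in degree \<open>e\<close> as long as the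
  characteristic does not divide \<open>e!\<close>. For \<open>F\<close> of degree \<open>d + 1\<close> we have \<open>F \<in> f\<^sup>\<perp>\<close> iff
  \<open>\<langle>F, f\<rangle> = 0\<close>; for \<open>G\<close> of degree \<open>d\<close> we have \<open>G \<in> f\<^sup>\<perp>\<close> iff \<open>G\<close> annihilates
  \<open>\<langle>\<nabla>f\<rangle>\<close>; and \<open>\<langle>z\<^sub>i G, g\<rangle> = \<langle>G, \<partial>g/\<partial>x\<^sub>i\<rangle>\<close>. Consequently, in degree \<open>d + 1\<close>,
  the annihilator of \<open>m f\<^sup>\<perp>\<close> is \<open>W = {g. \<langle>\<nabla>g\<rangle> \<subseteq> \<langle>\<nabla>f\<rangle>}\<close> while that of \<open>f\<^sup>\<perp>\<close>
  is \<open>k f\<close>, so by perfectness \<open>f\<^sup>\<perp>\<close> and \<open>m f\<^sup>\<perp>\<close> differ in degree \<open>d + 1\<close> iff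
  \<open>W \<noteq> k f\<close>.\<close>

lemma lookup_mp_smult: "Poly_Mapping.lookup (mp_smult c p) \<alpha> = c * Poly_Mapping.lookup p \<alpha>"
  unfolding mp_smult_def mp_const_def
  by (simp add: mult_map_scale_conv_mult[symmetric] map.rep_eq when_def)

lemma keys_mp_smult: "Poly_Mapping.keys (mp_smult c p) \<subseteq> Poly_Mapping.keys p"
  by (auto simp: in_keys_iff lookup_mp_smult)

lemma mp_smult_single: "mp_smult c (Poly_Mapping.single \<alpha> 1) = Poly_Mapping.single \<alpha> (c :: 'a::comm_semiring_1)"
  by (rule poly_mapping_eqI) (simp add: lookup_mp_smult lookup_single when_def)

interpretation mp: vector_space "mp_smult :: 'k::field \<Rightarrow> 'k mpoly \<Rightarrow> 'k mpoly"
  by unfold_locales (auto intro!: poly_mapping_eqI simp: lookup_mp_smult lookup_add algebra_simps)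

interpretation mp_dual: vector_space_pair "mp_smult :: 'k::field \<Rightarrow> 'k mpoly \<Rightarrow> 'k mpoly" "(*) :: 'k \<Rightarrow> 'k \<Rightarrow> 'k"
  by unfold_locales (auto simp: algebra_simps)

lemma (in vector_space) exists_linear_functional_separating:
  assumes "subspace U" "x \<notin> U"
  shows "\<exists>\<phi>. Vector_Spaces.linear scale (*) \<phi> \<and> (\<forall>u\<in>U. \<phi> u = 0) \<and> \<phi> x = 1"
proof -
  interpret pair: vector_space_pair scale "(*) :: 'a \<Rightarrow> 'a \<Rightarrow> 'a"
    by unfold_locales (auto simp: algebra_simps)
  obtain B where B: "B \<subseteq> U" "independent B" "U \<subseteq> span B"
    using maximal_independent_subset[of U] by blast
  have "span B = U" using B span_minimal[OF B(1) assms(1)] by blast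
  then have "independent (insert x B)" using independent_insertI B(2) assms(2) by blast
  then obtain \<phi> where lin: "Vector_Spaces.linear scale (*) \<phi>"
    and \<phi>: "\<forall>y\<in>insert x B. \<phi> y = (if y = x then 1 else 0)"
    using pair.linear_independent_extend[of "insert x B" "\<lambda>y. if y = x then 1 else 0"] by blast
  have "\<forall>y\<in>B. \<phi> y = 0" using \<phi> B(1) assms(2) by auto
  then have "\<forall>u\<in>span B. \<phi> u = 0" using pair.linear_eq_0_on_span[OF lin] by blast
  with \<open>span B = U\<close> lin \<phi> show ?thesis by auto
qed

section \<open>Coefficients of the apolarity action\<close>

lemma lookup_pderiv_mp:
  "Poly_Mapping.lookup (pderiv_mp i p) \<alpha> =
     (of_nat (Poly_Mapping.lookup \<alpha> i) + 1) * Poly_Mapping.lookup p (\<alpha> + Poly_Mapping.single i 1)"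
proof -
  let ?\<alpha>' = "\<alpha> + Poly_Mapping.single i 1"
  have "(of_nat (Poly_Mapping.lookup \<beta> i) * Poly_Mapping.lookup p \<beta> when \<beta> - Poly_Mapping.single i 1 = \<alpha>)
      = (if \<beta> = ?\<alpha>' then (of_nat (Poly_Mapping.lookup \<alpha> i) + 1) * Poly_Mapping.lookup p ?\<alpha>' else 0)" for \<beta>
  proof (cases "Poly_Mapping.lookup \<beta> i = 0")
    case True
    then have "\<beta> \<noteq> ?\<alpha>'" by (auto simp: lookup_add)
    with True show ?thesis by simp
  next
    case False
    then have "\<beta> - Poly_Mapping.single i 1 = \<alpha> \<longleftrightarrow> \<beta> = ?\<alpha>'"
      by (auto intro!: poly_mapping_eqI simp: lookup_add lookup_minus lookup_single when_def
          dest: arg_cong[where f = "\<lambda>\<gamma>. Poly_Mapping.lookup \<gamma> _"])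
    then show ?thesis by (auto simp: when_def lookup_add add.commute)
  qed
  then show ?thesis
    by (simp add: pderiv_mp_def lookup_sum lookup_single sum.delta in_keys_iff)
qed

lemma lookup_pderiv_mp_funpow:
  "Poly_Mapping.lookup ((pderiv_mp i ^^ k) p) \<alpha> =
     pochhammer (of_nat (Poly_Mapping.lookup \<alpha> i) + 1) k * Poly_Mapping.lookup p (\<alpha> + Poly_Mapping.single i k)"
proof (induction k arbitrary: \<alpha>)
  case (Suc k)
  have "\<alpha> + Poly_Mapping.single i 1 + Poly_Mapping.single i k = \<alpha> + Poly_Mapping.single i (Suc k)"
    by (simp add: add.assoc flip: single_add)
  then show ?case
    by (simp add: lookup_pderiv_mp Suc lookup_add pochhammer_rec algebra_simps)
qed simp

lemma sum_single_lookup: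
  assumes "finite A" "Poly_Mapping.keys \<beta> \<subseteq> A"
  shows "(\<Sum>i\<in>A. Poly_Mapping.single i (Poly_Mapping.lookup \<beta> i)) = \<beta>"
  using assms by (intro poly_mapping_eqI) (auto simp: lookup_sum lookup_single when_def in_keys_iff)

lemma lookup_foldr_pderiv_mp:
  assumes "distinct js"
  shows "Poly_Mapping.lookup (foldr (\<lambda>i h. (pderiv_mp i ^^ Poly_Mapping.lookup \<beta> i) h) js p) \<alpha> =
    (\<Prod>i\<in>set js. pochhammer (of_nat (Poly_Mapping.lookup \<alpha> i) + 1) (Poly_Mapping.lookup \<beta> i)) *
    Poly_Mapping.lookup p (\<alpha> + (\<Sum>i\<in>set js. Poly_Mapping.single i (Poly_Mapping.lookup \<beta> i)))"
  using assms
proof (induction js arbitrary: \<alpha>)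
  case (Cons j js)
  let ?\<alpha>' = "\<alpha> + Poly_Mapping.single j (Poly_Mapping.lookup \<beta> j)"
  have "Poly_Mapping.lookup ?\<alpha>' i = Poly_Mapping.lookup \<alpha> i" if "i \<in> set js" for i
    using that Cons.prems by (auto simp: lookup_add lookup_single when_def)
  then show ?case
    using Cons by (simp add: lookup_pderiv_mp_funpow add.assoc mult.assoc cong: prod.cong)
qed simp

lemma lookup_diff_op:
  assumes "Poly_Mapping.keys \<beta> \<subseteq> {..<n}"
  shows "Poly_Mapping.lookup (diff_op n \<beta> p) \<alpha> =
    (\<Prod>i<n. pochhammer (of_nat (Poly_Mapping.lookup \<alpha> i) + 1) (Poly_Mapping.lookup \<beta> i)) *
    Poly_Mapping.lookup p (\<alpha> + \<beta>)"
  using lookup_foldr_pderiv_mp[of "[0..<n]" \<beta> p \<alpha>] sum_single_lookup[OF _ assms]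
  by (simp add: diff_op_def atLeast0LessThan)

lemma lookup_apolar:
  assumes "F \<in> polyring n"
  shows "Poly_Mapping.lookup (apolar n F p) \<alpha> =
    (\<Sum>\<beta>\<in>Poly_Mapping.keys F. Poly_Mapping.lookup F \<beta> *
       (\<Prod>i<n. pochhammer (of_nat (Poly_Mapping.lookup \<alpha> i) + 1) (Poly_Mapping.lookup \<beta> i)) *
       Poly_Mapping.lookup p (\<alpha> + \<beta>))"
  using assms
  by (auto simp: apolar_def lookup_sum lookup_mp_smult polyring_def lookup_diff_op mult.assoc
      intro!: sum.cong)

section \<open>The apolarity pairing\<close>

definition mono_fact :: "(nat \<Rightarrow>\<^sub>0 nat) \<Rightarrow> nat" where
  "mono_fact \<alpha> = (\<Prod>i\<in>Poly_Mapping.keys \<alpha>. fact (Poly_Mapping.lookup \<alpha> i))"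

lemma mono_fact_eq_prod:
  assumes "finite A" "Poly_Mapping.keys \<alpha> \<subseteq> A"
  shows "mono_fact \<alpha> = (\<Prod>i\<in>A. fact (Poly_Mapping.lookup \<alpha> i))"
  unfolding mono_fact_def using assms by (intro prod.mono_neutral_left) (auto simp: in_keys_iff)

lemma mono_fact_single_add:
  "mono_fact (Poly_Mapping.single i 1 + \<alpha>) = Suc (Poly_Mapping.lookup \<alpha> i) * mono_fact \<alpha>"
proof -
  let ?A = "insert i (Poly_Mapping.keys \<alpha>)"
  have keys: "Poly_Mapping.keys (Poly_Mapping.single i 1 + \<alpha>) \<subseteq> ?A"
    using keys_add[of "Poly_Mapping.single i 1" \<alpha>] by auto
  have rest: "(\<Prod>j\<in>Poly_Mapping.keys \<alpha> - {i}. fact (Poly_Mapping.lookup (Poly_Mapping.single i 1 + \<alpha>) j))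
      = (\<Prod>j\<in>Poly_Mapping.keys \<alpha> - {i}. fact (Poly_Mapping.lookup \<alpha> j) :: nat)"
    by (rule prod.cong) (auto simp: lookup_add lookup_single)
  have "mono_fact (Poly_Mapping.single i 1 + \<alpha>)
      = (\<Prod>j\<in>?A. fact (Poly_Mapping.lookup (Poly_Mapping.single i 1 + \<alpha>) j))"
    using keys by (intro mono_fact_eq_prod) auto
  also have "\<dots> = fact (Suc (Poly_Mapping.lookup \<alpha> i)) *
      (\<Prod>j\<in>Poly_Mapping.keys \<alpha> - {i}. fact (Poly_Mapping.lookup \<alpha> j))"
    unfolding prod.insert_remove[OF finite_keys] rest by (simp add: lookup_add)
  also have "\<dots> = Suc (Poly_Mapping.lookup \<alpha> i) * (\<Prod>j\<in>?A. fact (Poly_Mapping.lookup \<alpha> j))"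
    unfolding prod.insert_remove[OF finite_keys] by (simp add: algebra_simps)
  also have "\<dots> = Suc (Poly_Mapping.lookup \<alpha> i) * mono_fact \<alpha>"
    using mono_fact_eq_prod[of ?A \<alpha>] by fastforce
  finally show ?thesis .
qed

lemma prod_fact_dvd_fact_sum: "(\<Prod>i\<in>A. fact (f i) :: nat) dvd fact (\<Sum>i\<in>A. f i)"
proof (induction A rule: infinite_finite_induct)
  case (insert x A)
  have "fact (f x) * (\<Prod>i\<in>A. fact (f i)) dvd (fact (f x) * fact (\<Sum>i\<in>A. f i) :: nat)"
    using insert.IH by (simp add: mult_dvd_mono)
  also have "\<dots> dvd fact (f x + (\<Sum>i\<in>A. f i))" by (rule fact_fact_dvd_fact)
  finally show ?case using insert.hyps by simp
qed simp_all

lemma of_nat_mono_fact_neq_0: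
  assumes "\<not> CHAR('k::field) dvd fact e" "mono_deg \<alpha> \<le> e"
  shows "(of_nat (mono_fact \<alpha>) :: 'k) \<noteq> 0"
proof
  assume "(of_nat (mono_fact \<alpha>) :: 'k) = 0"
  then have "CHAR('k) dvd mono_fact \<alpha>" by (simp add: of_nat_eq_0_iff_char_dvd)
  also have "mono_fact \<alpha> dvd fact (mono_deg \<alpha>)"
    unfolding mono_fact_def mono_deg_def by (rule prod_fact_dvd_fact_sum)
  also have "\<dots> dvd fact e" using assms(2) by (rule fact_dvd)
  finally show False using assms(1) by contradiction
qed

lemma of_nat_fact_mult_pochhammer:
  "of_nat (fact a) * pochhammer (of_nat a + 1) b = (of_nat (fact (a + b)) :: 'a::comm_semiring_1)"
proof -
  have "fact a * pochhammer (a + 1) b = (fact (a + b) :: nat)"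
    using pochhammer_product'[of "1 :: nat" a b] by (simp add: pochhammer_fact add.commute)
  then show ?thesis
    by (metis of_nat_Suc of_nat_mult pochhammer_of_nat Suc_eq_plus1 add.commute)
qed

lemma mono_fact_mult_lookup_apolar:
  assumes "F \<in> polyring n" "Poly_Mapping.keys \<gamma> \<subseteq> {..<n}"
  shows "of_nat (mono_fact \<gamma>) * Poly_Mapping.lookup (apolar n F p) \<gamma> =
    (\<Sum>\<beta>\<in>Poly_Mapping.keys F. Poly_Mapping.lookup F \<beta> * of_nat (mono_fact (\<gamma> + \<beta>)) *
       Poly_Mapping.lookup p (\<gamma> + \<beta>))"
proof -
  have coef: "of_nat (mono_fact \<gamma>) * (\<Prod>i<n. pochhammer (of_nat (Poly_Mapping.lookup \<gamma> i) + 1) (Poly_Mapping.lookup \<beta> i))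
      = (of_nat (mono_fact (\<gamma> + \<beta>)) :: 'a)" if "\<beta> \<in> Poly_Mapping.keys F" for \<beta>
  proof -
    have "Poly_Mapping.keys (\<gamma> + \<beta>) \<subseteq> {..<n}"
      using that assms keys_add[of \<gamma> \<beta>] by (auto simp: polyring_def)
    then show ?thesis
      using assms(2)
      by (simp add: mono_fact_eq_prod[of "{..<n}"] of_nat_prod lookup_add of_nat_fact_mult_pochhammer
          flip: prod.distrib)
  qed
  show ?thesis
    unfolding lookup_apolar[OF assms(1)] sum_distrib_left
  proof (intro sum.cong refl)
    fix \<beta> assume \<beta>: "\<beta> \<in> Poly_Mapping.keys F"
    show "of_nat (mono_fact \<gamma>) * (Poly_Mapping.lookup F \<beta> *
        (\<Prod>i<n. pochhammer (of_nat (Poly_Mapping.lookup \<gamma> i) + 1) (Poly_Mapping.lookup \<beta> i)) *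
        Poly_Mapping.lookup p (\<gamma> + \<beta>)) =
      Poly_Mapping.lookup F \<beta> * of_nat (mono_fact (\<gamma> + \<beta>)) * Poly_Mapping.lookup p (\<gamma> + \<beta>)"
      by (simp only: coef[OF \<beta>, symmetric] mult.assoc mult.left_commute)
  qed
qed

definition apolar_pairing :: "'a::comm_semiring_1 mpoly \<Rightarrow> 'a mpoly \<Rightarrow> 'a" where
  "apolar_pairing F p =
    (\<Sum>\<beta>\<in>Poly_Mapping.keys F. Poly_Mapping.lookup F \<beta> * of_nat (mono_fact \<beta>) * Poly_Mapping.lookup p \<beta>)"

lemma apolar_pairing_eq_sum:
  assumes "finite A" "Poly_Mapping.keys F \<inter> Poly_Mapping.keys p \<subseteq> A"
  shows "apolar_pairing F p =
    (\<Sum>\<beta>\<in>A. Poly_Mapping.lookup F \<beta> * of_nat (mono_fact \<beta>) * Poly_Mapping.lookup p \<beta>)"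
proof -
  have "apolar_pairing F p = (\<Sum>\<beta>\<in>Poly_Mapping.keys F \<union> A.
      Poly_Mapping.lookup F \<beta> * of_nat (mono_fact \<beta>) * Poly_Mapping.lookup p \<beta>)"
    unfolding apolar_pairing_def using assms(1) by (intro sum.mono_neutral_left) (auto simp: in_keys_iff)
  also have "\<dots> = (\<Sum>\<beta>\<in>A. Poly_Mapping.lookup F \<beta> * of_nat (mono_fact \<beta>) * Poly_Mapping.lookup p \<beta>)"
    using assms by (intro sum.mono_neutral_right) (auto simp: in_keys_iff subset_iff)
  finally show ?thesis .
qed

lemma apolar_pairing_commute: "apolar_pairing F p = apolar_pairing p F"
  using apolar_pairing_eq_sum[of "Poly_Mapping.keys F \<inter> Poly_Mapping.keys p" F p]
    apolar_pairing_eq_sum[of "Poly_Mapping.keys F \<inter> Poly_Mapping.keys p" p F]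
  by (simp add: ac_simps)

lemma lookup_apolar_0:
  "F \<in> polyring n \<Longrightarrow> Poly_Mapping.lookup (apolar n F p) 0 = apolar_pairing F p"
  using mono_fact_mult_lookup_apolar[of F n 0 p] by (simp add: apolar_pairing_def mono_fact_def)

lemma lookup_apolar_single:
  assumes "F \<in> polyring n" "j < n"
  shows "Poly_Mapping.lookup (apolar n F p) (Poly_Mapping.single j 1) = apolar_pairing F (pderiv_mp j p)"
proof -
  have "mono_fact (Poly_Mapping.single j 1) = 1"
    using mono_fact_single_add[of j 0] by (simp add: mono_fact_def)
  then have "Poly_Mapping.lookup (apolar n F p) (Poly_Mapping.single j 1) =
      (\<Sum>\<beta>\<in>Poly_Mapping.keys F. Poly_Mapping.lookup F \<beta> * of_nat (mono_fact (Poly_Mapping.single j 1 + \<beta>)) *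
        Poly_Mapping.lookup p (Poly_Mapping.single j 1 + \<beta>))"
    using mono_fact_mult_lookup_apolar[of F n "Poly_Mapping.single j 1" p] assms by simp
  also have "\<dots> = apolar_pairing F (pderiv_mp j p)"
    unfolding apolar_pairing_def lookup_pderiv_mp mono_fact_single_add
    by (simp add: add.commute algebra_simps)
  finally show ?thesis .
qed

lemma var_mult_eq_sum:
  "var i * (G :: 'a::comm_semiring_1 mpoly) = (\<Sum>\<beta>\<in>Poly_Mapping.keys G. Poly_Mapping.single (Poly_Mapping.single i 1 + \<beta>) (Poly_Mapping.lookup G \<beta>))"
proof -
  have "var i * G = var i * (\<Sum>\<beta>\<in>Poly_Mapping.keys G. Poly_Mapping.single \<beta> (Poly_Mapping.lookup G \<beta>))"
    by (simp add: sum_single_lookup)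
  then show ?thesis by (simp add: var_def sum_distrib_left mult_single)
qed

lemma keys_var_mult:
  "Poly_Mapping.keys (var i * (G :: 'a::comm_semiring_1 mpoly)) \<subseteq> (\<lambda>\<beta>. Poly_Mapping.single i 1 + \<beta>) ` Poly_Mapping.keys G"
  unfolding var_mult_eq_sum
  by (rule order.trans[OF keys_sum]) (auto split: if_splits)

lemma lookup_var_mult:
  "Poly_Mapping.lookup (var i * (G :: 'a::comm_semiring_1 mpoly)) (Poly_Mapping.single i 1 + \<beta>) =
    Poly_Mapping.lookup G \<beta>"
  unfolding var_mult_eq_sum lookup_sum by (simp add: lookup_single when_def in_keys_iff)

lemma apolar_pairing_var_mult:
  "apolar_pairing (var i * (G :: 'a::comm_semiring_1 mpoly)) p = apolar_pairing G (pderiv_mp i p)"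
proof -
  let ?shift = "\<lambda>\<beta>. Poly_Mapping.single i 1 + \<beta>"
  have "apolar_pairing (var i * G) p = (\<Sum>\<alpha>\<in>?shift ` Poly_Mapping.keys G.
      Poly_Mapping.lookup (var i * G) \<alpha> * of_nat (mono_fact \<alpha>) * Poly_Mapping.lookup p \<alpha>)"
    using keys_var_mult by (intro apolar_pairing_eq_sum) auto
  also have "\<dots> = (\<Sum>\<beta>\<in>Poly_Mapping.keys G. Poly_Mapping.lookup (var i * G) (?shift \<beta>) *
      of_nat (mono_fact (?shift \<beta>)) * Poly_Mapping.lookup p (?shift \<beta>))"
    by (rule sum.reindex[unfolded comp_def]) (simp add: inj_on_def)
  also have "\<dots> = apolar_pairing G (pderiv_mp i p)"
    unfolding apolar_pairing_def lookup_pderiv_mp lookup_var_mult mono_fact_single_add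
    by (intro sum.cong) (simp_all add: add.commute[of _ "Poly_Mapping.single i 1"] algebra_simps)
  finally show ?thesis .
qed

lemma mono_deg_eq_sum:
  "finite A \<Longrightarrow> Poly_Mapping.keys \<alpha> \<subseteq> A \<Longrightarrow> mono_deg \<alpha> = (\<Sum>i\<in>A. Poly_Mapping.lookup \<alpha> i)"
  unfolding mono_deg_def by (rule sum.mono_neutral_left) (auto simp: in_keys_iff)

lemma mono_deg_add: "mono_deg (\<alpha> + \<beta>) = mono_deg \<alpha> + mono_deg \<beta>"
proof -
  let ?A = "Poly_Mapping.keys \<alpha> \<union> Poly_Mapping.keys \<beta>"
  have "mono_deg (\<alpha> + \<beta>) = (\<Sum>i\<in>?A. Poly_Mapping.lookup (\<alpha> + \<beta>) i)"
    using keys_add[of \<alpha> \<beta>] by (intro mono_deg_eq_sum) auto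
  then show ?thesis
    by (simp add: lookup_add sum.distrib mono_deg_eq_sum[of ?A])
qed

lemma mono_deg_single [simp]: "mono_deg (Poly_Mapping.single i k) = k"
  by (simp add: mono_deg_def)

lemma mono_deg_eq_0_iff: "mono_deg \<alpha> = 0 \<longleftrightarrow> \<alpha> = 0"
  by (auto simp: mono_deg_def in_keys_iff intro: poly_mapping_eqI)

lemma mono_deg_eq_1D:
  assumes "mono_deg \<alpha> = 1"
  obtains j where "j \<in> Poly_Mapping.keys \<alpha>" "\<alpha> = Poly_Mapping.single j 1"
proof -
  have "\<alpha> \<noteq> 0" using assms by (auto simp: mono_deg_def)
  then obtain j where j: "j \<in> Poly_Mapping.keys \<alpha>"
    by (metis equals0I keys_eq_empty)
  have "mono_deg \<alpha> = Poly_Mapping.lookup \<alpha> j + (\<Sum>i\<in>Poly_Mapping.keys \<alpha> - {j}. Poly_Mapping.lookup \<alpha> i)"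
    unfolding mono_deg_def using j by (simp add: sum.remove)
  moreover have "Poly_Mapping.lookup \<alpha> j \<noteq> 0" using j by (simp add: in_keys_iff)
  ultimately have "Poly_Mapping.lookup \<alpha> j = 1"
    and "(\<Sum>i\<in>Poly_Mapping.keys \<alpha> - {j}. Poly_Mapping.lookup \<alpha> i) = 0"
    using assms by linarith+
  then have "\<alpha> = Poly_Mapping.single j 1"
    by (intro poly_mapping_eqI) (auto simp: lookup_single when_def in_keys_iff)
  with j show thesis by (rule that)
qed

lemma keys_subset_keys_add: "Poly_Mapping.keys (\<alpha> :: nat \<Rightarrow>\<^sub>0 nat) \<subseteq> Poly_Mapping.keys (\<alpha> + \<beta>)"
  by (auto simp: in_keys_iff lookup_add)

lemma lookup_le_mono_deg: "Poly_Mapping.lookup \<alpha> i \<le> mono_deg \<alpha>"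
  unfolding mono_deg_def
  by (cases "i \<in> Poly_Mapping.keys \<alpha>") (simp_all add: member_le_sum in_keys_iff)

lemma homogD:
  "p \<in> homog n e \<Longrightarrow> \<alpha> \<in> Poly_Mapping.keys p \<Longrightarrow> mono_deg \<alpha> = e \<and> Poly_Mapping.keys \<alpha> \<subseteq> {..<n}"
  by (auto simp: homog_def polyring_def)

lemma homogI:
  "(\<And>\<alpha>. \<alpha> \<in> Poly_Mapping.keys p \<Longrightarrow> mono_deg \<alpha> = e \<and> Poly_Mapping.keys \<alpha> \<subseteq> {..<n}) \<Longrightarrow> p \<in> homog n e"
  by (auto simp: homog_def polyring_def)

lemma homog_subset_polyring: "homog n e \<subseteq> polyring n"
  by (auto simp: homog_def)

lemma subspace_polyring: "mp.subspace (polyring n)"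
  using keys_add keys_mp_smult by (fastforce simp: mp.subspace_def polyring_def)

lemma subspace_homog: "mp.subspace (homog n e)"
  using keys_add keys_mp_smult by (fastforce simp: mp.subspace_def homog_def polyring_def)

lemma pderiv_mp_homog:
  assumes "p \<in> homog n (Suc e)"
  shows "pderiv_mp i p \<in> homog n e"
proof (rule homogI)
  fix \<alpha> assume "\<alpha> \<in> Poly_Mapping.keys (pderiv_mp i p)"
  then have "\<alpha> + Poly_Mapping.single i 1 \<in> Poly_Mapping.keys p"
    by (auto simp: in_keys_iff lookup_pderiv_mp)
  from homogD[OF assms this] show "mono_deg \<alpha> = e \<and> Poly_Mapping.keys \<alpha> \<subseteq> {..<n}"
    using keys_subset_keys_add[of \<alpha> "Poly_Mapping.single i 1"] by (auto simp: mono_deg_add)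
qed

lemma var_mult_homog:
  assumes "G \<in> homog n e" "i < n"
  shows "var i * (G :: 'a::comm_semiring_1 mpoly) \<in> homog n (Suc e)"
proof (rule homogI)
  fix \<alpha> assume "\<alpha> \<in> Poly_Mapping.keys (var i * G)"
  then obtain \<beta> where \<beta>: "\<beta> \<in> Poly_Mapping.keys G" and \<alpha>: "\<alpha> = Poly_Mapping.single i 1 + \<beta>"
    using keys_var_mult by blast
  from homogD[OF assms(1) \<beta>] assms(2) show "mono_deg \<alpha> = Suc e \<and> Poly_Mapping.keys \<alpha> \<subseteq> {..<n}"
    unfolding \<alpha> using keys_add[of "Poly_Mapping.single i 1" \<beta>] by (auto simp: mono_deg_add)
qed

lemma keys_apolar_homog:
  assumes "F \<in> homog n a" "p \<in> homog n (a + e)" "\<gamma> \<in> Poly_Mapping.keys (apolar n F p)"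
  shows "mono_deg \<gamma> = e \<and> Poly_Mapping.keys \<gamma> \<subseteq> {..<n}"
proof -
  have "(\<Sum>\<beta>\<in>Poly_Mapping.keys F. Poly_Mapping.lookup F \<beta> *
      (\<Prod>i<n. pochhammer (of_nat (Poly_Mapping.lookup \<gamma> i) + 1) (Poly_Mapping.lookup \<beta> i)) *
      Poly_Mapping.lookup p (\<gamma> + \<beta>)) \<noteq> 0"
    using assms(3) lookup_apolar[of F n p \<gamma>] homog_subset_polyring assms(1) by (force simp: in_keys_iff)
  then obtain \<beta> where \<beta>: "\<beta> \<in> Poly_Mapping.keys F" and "Poly_Mapping.lookup F \<beta> *
      (\<Prod>i<n. pochhammer (of_nat (Poly_Mapping.lookup \<gamma> i) + 1) (Poly_Mapping.lookup \<beta> i)) *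
      Poly_Mapping.lookup p (\<gamma> + \<beta>) \<noteq> 0"
    by (rule sum.not_neutral_contains_not_neutral)
  then have "\<gamma> + \<beta> \<in> Poly_Mapping.keys p" by (auto simp: in_keys_iff)
  from homogD[OF assms(2) this] homogD[OF assms(1) \<beta>] show ?thesis
    using keys_subset_keys_add[of \<gamma> \<beta>] by (auto simp: mono_deg_add)
qed


lemma apolar_eq_sum:
  assumes "finite A" "Poly_Mapping.keys F \<subseteq> A"
  shows "apolar n F p = (\<Sum>\<beta>\<in>A. mp_smult (Poly_Mapping.lookup F \<beta>) (diff_op n \<beta> p))"
  unfolding apolar_def using assms
  by (intro sum.mono_neutral_left) (auto simp: in_keys_iff mp_smult_def mp_const_def)

lemma apolar_add_left: "apolar n (F + G) p = apolar n F p + apolar n G (p :: 'k::field mpoly)"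
  using keys_add[of F G]
  by (simp add: apolar_eq_sum[of "Poly_Mapping.keys F \<union> Poly_Mapping.keys G"] lookup_add
      mp.scale_left_distrib sum.distrib)

lemma apolar_smult_left: "apolar n (mp_smult c F) p = mp_smult c (apolar n F (p :: 'k::field mpoly))"
  using keys_mp_smult[of c F]
  by (simp add: apolar_eq_sum[of "Poly_Mapping.keys F"] lookup_mp_smult mp.scale_sum_right)

lemma subspace_apolar_ideal: "mp.subspace (apolar_ideal n (f :: 'k::field mpoly))"
proof (rule mp.subspaceI)
  show "0 \<in> apolar_ideal n f"
    using mp.subspace_0[OF subspace_polyring] by (simp add: apolar_ideal_def apolar_def)
qed (use mp.subspace_add[OF subspace_polyring] mp.subspace_scale[OF subspace_polyring] in
    \<open>auto simp: apolar_ideal_def apolar_add_left apolar_smult_left\<close>)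

lemma linear_apolar_pairing: "Vector_Spaces.linear mp_smult (*) (apolar_pairing (F :: 'k::field mpoly))"
proof (rule Vector_Spaces.linear_iff[THEN iffD2], intro conjI allI)
  show "apolar_pairing F (p + q) = apolar_pairing F p + apolar_pairing F q" for p q
    by (simp add: apolar_pairing_def lookup_add distrib_left sum.distrib)
  show "apolar_pairing F (mp_smult c p) = c * apolar_pairing F p" for c p
    unfolding apolar_pairing_def lookup_mp_smult sum_distrib_left by (simp only: mult_ac)
qed (rule mp.vector_space_axioms mp_dual.vs2.vector_space_axioms)+

lemma mem_apolar_ideal_iff_apolar_pairing:
  assumes "F \<in> homog n e" "f \<in> homog n e"
  shows "F \<in> apolar_ideal n f \<longleftrightarrow> apolar_pairing F f = 0"
proof -
  have "Poly_Mapping.keys (apolar n F f) \<subseteq> {0}"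
    using keys_apolar_homog[of F n e f 0] assms by (auto simp: mono_deg_eq_0_iff)
  then have "apolar n F f = 0 \<longleftrightarrow> Poly_Mapping.lookup (apolar n F f) 0 = 0"
    by (auto intro!: poly_mapping_eqI simp: in_keys_iff)
  moreover have "F \<in> polyring n" using assms(1) homog_subset_polyring by blast
  ultimately show ?thesis by (simp add: apolar_ideal_def lookup_apolar_0)
qed

lemma apolar_pairing_pderiv_eq_0:
  "G \<in> apolar_ideal n f \<Longrightarrow> j < n \<Longrightarrow> apolar_pairing G (pderiv_mp j f) = 0"
  using lookup_apolar_single[of G n j f] by (simp add: apolar_ideal_def)

lemma homog_mem_apolar_idealI:
  assumes G: "G \<in> homog n e" and f: "f \<in> homog n (Suc e)"
    and orth: "\<forall>j<n. apolar_pairing G (pderiv_mp j f) = 0"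
  shows "G \<in> apolar_ideal n f"
proof -
  have "Poly_Mapping.lookup (apolar n G f) \<gamma> = 0" for \<gamma>
  proof (rule ccontr)
    assume nz: "Poly_Mapping.lookup (apolar n G f) \<gamma> \<noteq> 0"
    then have "mono_deg \<gamma> = 1 \<and> Poly_Mapping.keys \<gamma> \<subseteq> {..<n}"
      using keys_apolar_homog[of G n e f 1] G f by (simp add: in_keys_iff)
    then obtain j where j: "j < n" and \<gamma>: "\<gamma> = Poly_Mapping.single j 1"
      by (metis lessThan_iff mono_deg_eq_1D subsetD)
    have "Poly_Mapping.lookup (apolar n G f) \<gamma> = apolar_pairing G (pderiv_mp j f)"
      unfolding \<gamma> using G homog_subset_polyring j by (blast intro: lookup_apolar_single)
    with nz orth j show False by simp
  qed
  then have "apolar n G f = 0" by (intro poly_mapping_eqI) simp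
  with G homog_subset_polyring show ?thesis by (auto simp: apolar_ideal_def)
qed

lemma subspace_max_ideal_times:
  fixes I :: "'k::field mpoly set"
  assumes "mp.subspace I"
  shows "mp.subspace (max_ideal_times n I)"
proof (rule mp.subspaceI)
  show "0 \<in> max_ideal_times n I"
    using mp.subspace_0[OF assms] unfolding max_ideal_times_def
    by (intro CollectI exI[of _ "\<lambda>_. 0"]) simp
next
  fix x y assume "x \<in> max_ideal_times n I" "y \<in> max_ideal_times n I"
  then obtain G H where "x = (\<Sum>i<n. var i * G i)" "y = (\<Sum>i<n. var i * H i)"
    and "\<forall>i<n. G i \<in> I" "\<forall>i<n. H i \<in> I"
    unfolding max_ideal_times_def by blast
  then show "x + y \<in> max_ideal_times n I"
    using mp.subspace_add[OF assms] unfolding max_ideal_times_def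
    by (intro CollectI exI[of _ "\<lambda>i. G i + H i"]) (simp add: distrib_left sum.distrib)
next
  fix c x assume "x \<in> max_ideal_times n I"
  then obtain G where "x = (\<Sum>i<n. var i * G i)" "\<forall>i<n. G i \<in> I"
    unfolding max_ideal_times_def by blast
  then show "mp_smult c x \<in> max_ideal_times n I"
    using mp.subspace_scale[OF assms] unfolding max_ideal_times_def
    by (intro CollectI exI[of _ "\<lambda>i. mp_smult c (G i)"])
      (simp add: mp_smult_def sum_distrib_left mult.left_commute)
qed

lemma var_mult_mem_max_ideal_times:
  assumes "mp.subspace I" "G \<in> I" "i < n"
  shows "var i * G \<in> max_ideal_times n (I :: 'k::field mpoly set)"
proof -
  have "var i * G = (\<Sum>j<n. var j * (if j = i then G else 0))"
    using assms(3) by (simp add: if_distrib cong: if_cong)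
  moreover have "\<forall>j<n. (if j = i then G else 0) \<in> I"
    using assms(2) mp.subspace_0[OF assms(1)] by simp
  ultimately show ?thesis
    unfolding max_ideal_times_def by (intro CollectI exI[of _ "\<lambda>j. if j = i then G else 0"] conjI)
qed

lemma subspace_grad_span: "mp.subspace (grad_span n (f :: 'k::field mpoly))"
proof (rule mp.subspaceI)
  show "0 \<in> grad_span n f"
    unfolding grad_span_def by (intro CollectI exI[of _ "\<lambda>_. 0"]) simp
next
  fix x y assume "x \<in> grad_span n f" "y \<in> grad_span n f"
  then obtain a b where "x = (\<Sum>i<n. mp_smult (a i) (pderiv_mp i f))" "y = (\<Sum>i<n. mp_smult (b i) (pderiv_mp i f))"
    unfolding grad_span_def by blast
  then show "x + y \<in> grad_span n f"
    unfolding grad_span_def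
    by (intro CollectI exI[of _ "\<lambda>i. a i + b i"]) (simp add: mp.scale_left_distrib sum.distrib)
next
  fix c x assume "x \<in> grad_span n f"
  then obtain a where "x = (\<Sum>i<n. mp_smult (a i) (pderiv_mp i f))"
    unfolding grad_span_def by blast
  then show "mp_smult c x \<in> grad_span n f"
    unfolding grad_span_def by (intro CollectI exI[of _ "\<lambda>i. c * a i"]) (simp add: mp.scale_sum_right)
qed

lemma pderiv_mp_mem_grad_span: "i < n \<Longrightarrow> pderiv_mp i f \<in> grad_span n (f :: 'k::field mpoly)"
proof -
  assume i: "i < n"
  have "(\<Sum>j<n. mp_smult (if j = i then 1 else 0) (pderiv_mp j f)) = (\<Sum>j<n. if j = i then pderiv_mp j f else 0)"
    by (rule sum.cong) simp_all
  with i show ?thesis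
    unfolding grad_span_def by (intro CollectI exI[of _ "\<lambda>j. if j = i then 1 else 0"]) simp
qed

lemma grad_span_subset:
  assumes "mp.subspace V" "\<forall>i<n. pderiv_mp i g \<in> V"
  shows "grad_span n (g :: 'k::field mpoly) \<subseteq> V"
proof
  fix x assume "x \<in> grad_span n g"
  then obtain c where "x = (\<Sum>i<n. mp_smult (c i) (pderiv_mp i g))"
    unfolding grad_span_def by blast
  with assms show "x \<in> V" by (auto intro!: mp.subspace_sum mp.subspace_scale)
qed

lemma grad_span_subset_homog: "f \<in> homog n (Suc e) \<Longrightarrow> grad_span n (f :: 'k::field mpoly) \<subseteq> homog n e"
  by (intro grad_span_subset subspace_homog allI impI pderiv_mp_homog)

lemma apolar_pairing_max_ideal_times_eq_0:
  assumes "F \<in> max_ideal_times n (apolar_ideal n f)" "grad_span n g \<subseteq> grad_span n (f :: 'k::field mpoly)"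
  shows "apolar_pairing F g = 0"
proof -
  obtain G where F: "F = (\<Sum>i<n. var i * G i)" and G: "\<forall>i<n. G i \<in> apolar_ideal n f"
    using assms(1) unfolding max_ideal_times_def by blast
  have "apolar_pairing (G i) (pderiv_mp i g) = 0" if i: "i < n" for i
  proof -
    have "grad_span n f \<subseteq> {q. apolar_pairing (G i) q = 0}"
      using G i apolar_pairing_pderiv_eq_0
      by (intro grad_span_subset mp_dual.linear_subspace_kernel linear_apolar_pairing) blast
    then show ?thesis using assms(2) pderiv_mp_mem_grad_span[OF i] by blast
  qed
  then show ?thesis
    by (simp add: F apolar_pairing_commute[of _ g] mp_dual.linear_sum[OF linear_apolar_pairing])
      (simp add: apolar_pairing_commute[of g] apolar_pairing_var_mult)
qed

section \<open>Perfectness of the pairing\<close>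

definition monomials :: "nat \<Rightarrow> nat \<Rightarrow> (nat \<Rightarrow>\<^sub>0 nat) set" where
  "monomials n e = {\<alpha>. Poly_Mapping.keys \<alpha> \<subseteq> {..<n} \<and> mono_deg \<alpha> = e}"

lemma finite_monomials: "finite (monomials n e)"
proof -
  have "Poly_Mapping.lookup ` monomials n e \<subseteq> {f. \<forall>i. (i \<in> {..<n} \<longrightarrow> f i \<in> {..e}) \<and> (i \<notin> {..<n} \<longrightarrow> f i = 0)}"
  proof
    fix f assume "f \<in> Poly_Mapping.lookup ` monomials n e"
    then obtain \<alpha> where "Poly_Mapping.keys \<alpha> \<subseteq> {..<n}" "mono_deg \<alpha> = e" "f = Poly_Mapping.lookup \<alpha>"
      by (auto simp: monomials_def)
    then show "f \<in> {f. \<forall>i. (i \<in> {..<n} \<longrightarrow> f i \<in> {..e}) \<and> (i \<notin> {..<n} \<longrightarrow> f i = 0)}"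
      using lookup_le_mono_deg[of \<alpha>] by (auto simp: in_keys_iff)
  qed
  then have "finite (Poly_Mapping.lookup ` monomials n e)"
    by (rule finite_subset) (intro finite_set_of_finite_funs; simp)
  then show ?thesis
    by (rule finite_imageD) (auto intro: inj_onI poly_mapping_eqI)
qed

definition pairing_dual :: "nat \<Rightarrow> nat \<Rightarrow> ('k::field mpoly \<Rightarrow> 'k) \<Rightarrow> 'k mpoly" where
  "pairing_dual n e \<phi> =
    (\<Sum>\<alpha>\<in>monomials n e. Poly_Mapping.single \<alpha> (\<phi> (Poly_Mapping.single \<alpha> 1) / of_nat (mono_fact \<alpha>)))"

lemma lookup_pairing_dual:
  "Poly_Mapping.lookup (pairing_dual n e \<phi>) \<alpha> =
    (if \<alpha> \<in> monomials n e then \<phi> (Poly_Mapping.single \<alpha> 1) / of_nat (mono_fact \<alpha>) else 0)"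
  by (simp add: pairing_dual_def lookup_sum lookup_single when_def finite_monomials)

lemma pairing_dual_homog: "pairing_dual n e \<phi> \<in> homog n e"
  by (rule homogI) (auto simp: in_keys_iff lookup_pairing_dual monomials_def split: if_splits)

lemma apolar_pairing_pairing_dual:
  fixes \<phi> :: "'k::field mpoly \<Rightarrow> 'k"
  assumes "\<not> CHAR('k) dvd fact e" "Vector_Spaces.linear mp_smult (*) \<phi>" "H \<in> homog n e"
  shows "apolar_pairing H (pairing_dual n e \<phi>) = \<phi> H"
proof -
  have "\<phi> H = \<phi> (\<Sum>\<beta>\<in>Poly_Mapping.keys H. mp_smult (Poly_Mapping.lookup H \<beta>) (Poly_Mapping.single \<beta> 1))"
    by (simp add: mp_smult_single sum_single_lookup)
  also have "\<dots> = (\<Sum>\<beta>\<in>Poly_Mapping.keys H. Poly_Mapping.lookup H \<beta> * \<phi> (Poly_Mapping.single \<beta> 1))"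
    by (simp add: mp_dual.linear_sum[OF assms(2)] mp_dual.linear_scale[OF assms(2)])
  also have "\<dots> = apolar_pairing H (pairing_dual n e \<phi>)"
    unfolding apolar_pairing_def
  proof (rule sum.cong)
    fix \<beta> assume "\<beta> \<in> Poly_Mapping.keys H"
    with assms(3) have "\<beta> \<in> monomials n e" and "mono_deg \<beta> \<le> e"
      by (auto dest: homogD simp: monomials_def)
    with assms(1) show "Poly_Mapping.lookup H \<beta> * \<phi> (Poly_Mapping.single \<beta> 1) =
        Poly_Mapping.lookup H \<beta> * of_nat (mono_fact \<beta>) * Poly_Mapping.lookup (pairing_dual n e \<phi>) \<beta>"
      by (simp add: lookup_pairing_dual of_nat_mono_fact_neq_0)
  qed simp
  finally show ?thesis ..
qed

lemma exists_homog_separating: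
  fixes U :: "'k::field mpoly set"
  assumes "\<not> CHAR('k) dvd fact e" "mp.subspace U" "U \<subseteq> homog n e" "x \<in> homog n e" "x \<notin> U"
  obtains y where "y \<in> homog n e" "\<forall>u\<in>U. apolar_pairing u y = 0" "apolar_pairing x y = 1"
proof -
  obtain \<phi> where \<phi>: "Vector_Spaces.linear mp_smult (*) \<phi>" "\<forall>u\<in>U. \<phi> u = 0" "\<phi> x = 1"
    using mp.exists_linear_functional_separating[OF assms(2,5)] by blast
  show thesis
    by (rule that[of "pairing_dual n e \<phi>"])
      (use \<phi> assms in \<open>auto simp: pairing_dual_homog apolar_pairing_pairing_dual\<close>)
qed

lemma pderiv_mp_mem_grad_span_if_orthogonal:
  fixes f g :: "'k::field mpoly"
  assumes char: "\<not> CHAR('k) dvd fact d" and f: "f \<in> homog n (Suc d)" and g: "g \<in> homog n (Suc d)"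
    and i: "i < n" and orth: "\<forall>G \<in> apolar_ideal n f \<inter> homog n d. apolar_pairing (var i * G) g = 0"
  shows "pderiv_mp i g \<in> grad_span n f"
proof (rule ccontr)
  assume "pderiv_mp i g \<notin> grad_span n f"
  then obtain G where G: "G \<in> homog n d" "\<forall>q\<in>grad_span n f. apolar_pairing q G = 0"
    and G_sep: "apolar_pairing (pderiv_mp i g) G = 1"
    using exists_homog_separating[OF char subspace_grad_span grad_span_subset_homog[OF f]
        pderiv_mp_homog[OF g]] by blast
  have "G \<in> apolar_ideal n f"
    using G(2) pderiv_mp_mem_grad_span
    by (intro homog_mem_apolar_idealI[OF G(1) f]) (auto simp: apolar_pairing_commute[of G])
  with orth G(1) have "apolar_pairing G (pderiv_mp i g) = 0"
    by (simp add: apolar_pairing_var_mult)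
  with G_sep show False by (simp add: apolar_pairing_commute)
qed

lemma grad_span_witness_if_has_min_gen:
  fixes f :: "'k::field mpoly"
  assumes char: "\<not> CHAR('k) dvd fact (Suc d)" and f: "f \<in> homog n (Suc d)"
    and "has_min_gen_in_degree n (apolar_ideal n f) (Suc d)"
  obtains g where "g \<in> homog n (Suc d)" "\<nexists>c. g = mp_smult c f" "grad_span n g \<subseteq> grad_span n f"
proof -
  let ?I = "apolar_ideal n f"
  let ?U = "max_ideal_times n ?I \<inter> homog n (Suc d)"
  obtain F where F: "F \<in> ?I" "F \<in> homog n (Suc d)" "F \<notin> max_ideal_times n ?I"
    using assms(3) by (auto simp: has_min_gen_in_degree_def)
  have "mp.subspace ?U"
    by (intro mp.subspace_inter subspace_max_ideal_times subspace_apolar_ideal subspace_homog)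
  then obtain g where g: "g \<in> homog n (Suc d)" "\<forall>u\<in>?U. apolar_pairing u g = 0"
    and F_g: "apolar_pairing F g = 1"
    using exists_homog_separating[OF char _ _ F(2)] F(3) by blast
  have "apolar_pairing F (mp_smult c f) = 0" for c
    using F mem_apolar_ideal_iff_apolar_pairing[OF F(2) f]
    by (simp add: mp_dual.linear_scale[OF linear_apolar_pairing])
  with F_g have "\<nexists>c. g = mp_smult c f" by auto
  moreover have "grad_span n g \<subseteq> grad_span n f"
  proof (intro grad_span_subset subspace_grad_span allI impI)
    fix i assume i: "i < n"
    have "var i * G \<in> ?U" if "G \<in> ?I \<inter> homog n d" for G
      using that i by (simp add: var_mult_mem_max_ideal_times subspace_apolar_ideal var_mult_homog)
    moreover have "\<not> CHAR('k) dvd fact d"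
      using char dvd_trans[OF _ fact_dvd[of d "Suc d"]] by auto
    ultimately show "pderiv_mp i g \<in> grad_span n f"
      using g(2) by (intro pderiv_mp_mem_grad_span_if_orthogonal[OF _ f g(1) i]) auto
  qed
  ultimately show thesis using g(1) that by blast
qed

lemma has_min_gen_if_grad_span_witness:
  fixes f g :: "'k::field mpoly"
  assumes char: "\<not> CHAR('k) dvd fact (Suc d)" and f: "f \<in> homog n (Suc d)"
    and g: "g \<in> homog n (Suc d)" "\<nexists>c. g = mp_smult c f" "grad_span n g \<subseteq> grad_span n f"
  shows "has_min_gen_in_degree n (apolar_ideal n f) (Suc d)"
proof -
  have "mp.span {f} \<subseteq> homog n (Suc d)"
    using f by (intro mp.span_minimal subspace_homog) simp
  moreover have "g \<notin> mp.span {f}"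
    using g(2) by (auto simp: mp.span_singleton)
  ultimately obtain F where F: "F \<in> homog n (Suc d)" "\<forall>u\<in>mp.span {f}. apolar_pairing u F = 0"
    and g_F: "apolar_pairing g F = 1"
    using exists_homog_separating[OF char mp.subspace_span _ g(1)] by blast
  have "F \<in> apolar_ideal n f"
    using F mp.span_base[of f "{f}"]
    by (simp add: mem_apolar_ideal_iff_apolar_pairing[OF F(1) f] apolar_pairing_commute[of F])
  moreover have "F \<notin> max_ideal_times n (apolar_ideal n f)"
  proof
    assume "F \<in> max_ideal_times n (apolar_ideal n f)"
    then have "apolar_pairing F g = 0" using g(3) by (rule apolar_pairing_max_ideal_times_eq_0)
    with g_F show False by (simp add: apolar_pairing_commute)
  qed
  ultimately show ?thesis
    using F(1) by (auto simp: has_min_gen_in_degree_def)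
qed

theorem proposition3p9:
  fixes f :: "'k::alg_closed_field mpoly" and n d :: nat
  assumes "\<not> CHAR('k) dvd fact (d + 1)"
    and "f \<in> homog n (d + 1)"
  shows "has_min_gen_in_degree n (apolar_ideal n f) (d + 1) \<longleftrightarrow>
    (\<exists>g \<in> homog n (d + 1). (\<nexists>c. g = mp_smult c f) \<and> grad_span n g \<subseteq> grad_span n f)"
proof -
  have char: "\<not> CHAR('k) dvd fact (Suc d)" and f: "f \<in> homog n (Suc d)"
    using assms by simp_all
  show ?thesis
    unfolding Suc_eq_plus1[symmetric]
  proof
    assume "has_min_gen_in_degree n (apolar_ideal n f) (Suc d)"
    then obtain g where "g \<in> homog n (Suc d)" "\<nexists>c. g = mp_smult c f" "grad_span n g \<subseteq> grad_span n f"
      by (rule grad_span_witness_if_has_min_gen[OF char f])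
    then show "\<exists>g \<in> homog n (Suc d). (\<nexists>c. g = mp_smult c f) \<and> grad_span n g \<subseteq> grad_span n f"
      by blast
  next
    assume "\<exists>g \<in> homog n (Suc d). (\<nexists>c. g = mp_smult c f) \<and> grad_span n g \<subseteq> grad_span n f"
    then show "has_min_gen_in_degree n (apolar_ideal n f) (Suc d)"
      using has_min_gen_if_grad_span_witness[OF char f] by blast
  qed
qed

end
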